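(* Let $d\in\{1,2,3,7,11\}$, $K=\mathbb{Q}(\sqrt{-d})$ with discriminant $d_K$ and ring of integers $\mathcal{O}_d$, let $\Delta$ be a positive integer which is not of the form $\beta\bar\beta$ with $\beta\in\mathcal{O}_d$, and let $k\ge1$ be odd. Let $$H_{k,\Delta}(z)=\sum_{\substack{(a,b,c)\in\mathbb{Z}\times\mathcal{O}_d\times\mathbb{Z}\\ b\bar b-ac=\Delta,\ a<0}}\max\left(0,\left(a|z|^2+bz+\bar b\bar z+c\right)^k\right).$$ Then the average value of $H_{k,\Delta}$ over a fundamental parallelogram $\mathcal{P}$ of the lattice $\mathcal{O}_d\subset\mathbb{C}$ is $$\langle H_{k,\Delta}\rangle_{av}:=\frac{1}{|\mathcal{P}|}\int_{\mathcal{P}}H_{k,\Delta}(x+iy)\,dx\,dy=\frac{2\pi\Delta^{k+1}}{(k+1)\sqrt{|d_K|}}\,Z(-\Delta,k+1).$$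
   Context: $H_{k,\Delta}$ is continuous and invariant under translation by $\mathcal{O}_d$. $\mathcal{P}$ is the fundamental parallelogram $\{x+y\omega:0\le x,y<1\}$ for a $\mathbb{Z}$-basis $\{1,\omega\}$ of $\mathcal{O}_d$; its Euclidean area is $|\mathcal{P}|=\sqrt{|d_K|}/2$. For integers $D$ and $n\ge1$, $r(D,n)=\#\{\beta\in\mathcal{O}_d/n\mathcal{O}_d:\ \beta\bar\beta+D\equiv0\pmod n\}$, and $Z(D,s)=\sum_{n=1}^\infty r(D,n)\,n^{-s-1}$. *)

theory Defs
  imports "HOL-Analysis.Analysis"
begin

definition omega :: "nat \<Rightarrow> complex" where
  "omega d = (if d mod 4 = 3 then (1 + \<i> * complex_of_real (sqrt (real d))) / 2
              else \<i> * complex_of_real (sqrt (real d)))"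

definition discK :: "nat \<Rightarrow> int" where
  "discK d = (if d mod 4 = 3 then - int d else - 4 * int d)"

definition Od :: "nat \<Rightarrow> complex set" where
  "Od d = {of_int m + of_int n * omega d | m n. True}"

definition Par :: "nat \<Rightarrow> complex set" where
  "Par d = {of_real x + of_real y * omega d | x y. 0 \<le> x \<and> x < 1 \<and> 0 \<le> y \<and> y < 1}"

definition congOd :: "nat \<Rightarrow> nat \<Rightarrow> (complex \<times> complex) set" where
  "congOd d n = {(\<beta>, \<gamma>). \<beta> \<in> Od d \<and> \<gamma> \<in> Od d \<and>
                   (\<exists>\<delta>\<in>Od d. \<beta> - \<gamma> = of_nat n * \<delta>)}"

definition r_count :: "nat \<Rightarrow> int \<Rightarrow> nat \<Rightarrow> nat" where
  "r_count d D n = card {C \<in> Od d // congOd d n.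
      \<exists>\<beta>\<in>C. \<exists>m::int. \<beta> * cnj \<beta> + of_int D = of_int (int n * m)}"

definition Zfun :: "nat \<Rightarrow> int \<Rightarrow> real \<Rightarrow> real" where
  "Zfun d D s = (\<Sum>n. real (r_count d D (Suc n)) * real (Suc n) powr (- s - 1))"

definition Hfun :: "nat \<Rightarrow> nat \<Rightarrow> int \<Rightarrow> complex \<Rightarrow> real" where
  "Hfun d k \<Delta> z = infsum (\<lambda>(a, b, c).
       max 0 ((Re (of_int a * complex_of_real ((cmod z)\<^sup>2) + b * z + cnj b * cnj z + of_int c)) ^ k))
     {(a, b, c). b \<in> Od d \<and> b * cnj b - of_int (a * c) = of_int \<Delta> \<and> a < 0}"

end

(* Writing a = -n and b = cnj beta, the term (a, b, c) of H is the radial bump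
   (Delta/n - n |z - beta/n|^2)_+^k, where beta runs over the solutions of
   beta * cnj beta = Delta (mod n).  Splitting beta = beta0 + n lambda with beta0 a residue
   mod n O_d and lambda in O_d, the integrals over P of the translates by lambda add up to
   the integral of one bump over the plane, pi (Delta/n)^(k+1) / (n (k+1)); there are
   r(-Delta, n) residues beta0.  Summing over n gives |P| times the right-hand side.
   All interchanges are Tonelli's theorem; the crude bound r(D, n) <= 3 n^(7/4) makes the
   series converge, which is what identifies the real-valued integral with this value. *)

theory Submission
  imports Defs
begin

section \<open>The lattice \<open>O\<^sub>d\<close> in coordinates\<close>

definition omega_tr :: "nat \<Rightarrow> int" where
  "omega_tr d = (if d mod 4 = 3 then 1 else 0)"

definition omega_nm :: "nat \<Rightarrow> int" where
  "omega_nm d = (if d mod 4 = 3 then (int d + 1) div 4 else int d)"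

definition norm_form :: "nat \<Rightarrow> int \<Rightarrow> int \<Rightarrow> int" where
  "norm_form d x y = x\<^sup>2 + omega_tr d * x * y + omega_nm d * y\<^sup>2"

definition lattice_point :: "nat \<Rightarrow> int \<Rightarrow> int \<Rightarrow> complex" where
  "lattice_point d x y = of_int x + of_int y * omega d"

definition coord2 :: "nat \<Rightarrow> complex \<Rightarrow> real" where
  "coord2 d z = Im z / Im (omega d)"

definition coord1 :: "nat \<Rightarrow> complex \<Rightarrow> real" where
  "coord1 d z = Re z - coord2 d z * Re (omega d)"

lemma Im_omega_pos: "d > 0 \<Longrightarrow> Im (omega d) > 0"
  by (auto simp: omega_def)

lemma omega_add_cnj: "omega d + cnj (omega d) = of_int (omega_tr d)"
  by (auto simp: omega_def omega_tr_def complex_eq_iff)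

lemma omega_mult_cnj: "omega d * cnj (omega d) = of_int (omega_nm d)"
proof (cases "d mod 4 = 3")
  case True
  then have "int d + 1 = 4 * ((int d + 1) div 4)" by presburger
  then have "real d + 1 = 4 * real_of_int ((int d + 1) div 4)"
    by (metis of_int_1 of_int_add of_int_mult of_int_numeral of_int_of_nat_eq)
  with True show ?thesis
    by (auto simp: omega_def omega_nm_def complex_eq_iff field_simps power2_eq_square)
qed (auto simp: omega_def omega_nm_def complex_eq_iff power2_eq_square)

lemma lattice_point_mult_cnj: "lattice_point d x y * cnj (lattice_point d x y) = of_int (norm_form d x y)"
proof -
  have "lattice_point d x y * cnj (lattice_point d x y) = of_int x ^ 2
          + of_int x * of_int y * (omega d + cnj (omega d)) + of_int y ^ 2 * (omega d * cnj (omega d))"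
    by (simp add: lattice_point_def algebra_simps power2_eq_square)
  then show ?thesis
    by (simp add: omega_add_cnj omega_mult_cnj norm_form_def algebra_simps)
qed

lemma cnj_lattice_point: "cnj (lattice_point d x y) = lattice_point d (x + omega_tr d * y) (- y)"
proof -
  have cnj_omega: "cnj (omega d) = of_int (omega_tr d) - omega d"
    using omega_add_cnj[of d] by (simp add: algebra_simps eq_diff_eq)
  show ?thesis
    by (simp add: lattice_point_def cnj_omega algebra_simps)
qed

lemma lattice_point_diff: "lattice_point d x y - lattice_point d x' y' = lattice_point d (x - x') (y - y')"
  by (simp add: lattice_point_def algebra_simps)

lemma lattice_point_add_mult:
  "lattice_point d (x + n * p) (y + n * q) = lattice_point d x y + of_int n * lattice_point d p q"
  by (simp add: lattice_point_def algebra_simps)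

lemma coord1_lattice_point [simp]: "d > 0 \<Longrightarrow> coord1 d (lattice_point d x y) = x"
  and coord2_lattice_point [simp]: "d > 0 \<Longrightarrow> coord2 d (lattice_point d x y) = y"
  using Im_omega_pos[of d] by (simp_all add: coord1_def coord2_def lattice_point_def)

lemma coord1_add: "coord1 d (z + w) = coord1 d z + coord1 d w"
  and coord2_add: "coord2 d (z + w) = coord2 d z + coord2 d w"
  by (simp_all add: coord1_def coord2_def add_divide_distrib algebra_simps)

lemma lattice_point_eq_iff: "d > 0 \<Longrightarrow> lattice_point d x y = lattice_point d x' y' \<longleftrightarrow> x = x' \<and> y = y'"
  by (metis coord1_lattice_point coord2_lattice_point of_int_eq_iff)

lemma Od_eq_range: "Od d = range (\<lambda>(x, y). lattice_point d x y)"
  by (auto simp: Od_def lattice_point_def)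

lemma lattice_point_in_Od [simp]: "lattice_point d x y \<in> Od d"
  by (auto simp: Od_eq_range)

lemma OdE:
  assumes "\<beta> \<in> Od d"
  obtains x y where "\<beta> = lattice_point d x y"
  using assms by (auto simp: Od_eq_range)

lemma Par_eq_coords:
  assumes "d > 0"
  shows "Par d = {z. 0 \<le> coord1 d z \<and> coord1 d z < 1 \<and> 0 \<le> coord2 d z \<and> coord2 d z < 1}"
proof -
  have decomp: "z = of_real (coord1 d z) + of_real (coord2 d z) * omega d" for z
    using Im_omega_pos[OF assms] by (simp add: coord1_def coord2_def complex_eq_iff)
  have coords: "coord1 d (of_real x + of_real y * omega d) = x"
    "coord2 d (of_real x + of_real y * omega d) = y" for x y
    using Im_omega_pos[OF assms] by (simp_all add: coord1_def coord2_def)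
  show ?thesis
    unfolding Par_def using decomp by (auto simp: coords)
qed

lemma norm_form_diff_dvd:
  assumes "m dvd x - x'" "m dvd y - y'"
  shows "m dvd norm_form d x y - norm_form d x' y'"
proof -
  obtain a b where ab: "x = x' + m * a" "y = y' + m * b"
    using assms by (metis dvdE diff_add_cancel add.commute)
  have "norm_form d x y - norm_form d x' y' = m * (2 * x' * a + m * a\<^sup>2
          + omega_tr d * (x' * b + a * y' + m * a * b) + omega_nm d * (2 * y' * b + m * b\<^sup>2))"
    unfolding norm_form_def ab by (simp add: algebra_simps power2_eq_square)
  then show ?thesis by simp
qed

lemma int_dvd_diff_imp_eq:
  fixes x x' :: int
  shows "0 \<le> x \<Longrightarrow> x < m \<Longrightarrow> 0 \<le> x' \<Longrightarrow> x' < m \<Longrightarrow> m dvd x - x' \<Longrightarrow> x = x'"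
  by (metis mod_eq_dvd_iff mod_pos_pos_trivial)

section \<open>Counting \<open>r(D, n)\<close> by residues of coordinates\<close>

lemma equiv_congOd: "equiv (Od d) (congOd d n)"
proof (rule equivI)
  show "congOd d n \<subseteq> Od d \<times> Od d"
    by (auto simp: congOd_def)
  have "0 \<in> Od d"
    using lattice_point_in_Od[of d 0 0] by (simp add: lattice_point_def)
  then show "refl_on (Od d) (congOd d n)"
    unfolding refl_on_def congOd_def by auto
  show "sym (congOd d n)"
  proof (rule symI)
    fix \<beta> \<gamma> assume "(\<beta>, \<gamma>) \<in> congOd d n"
    then obtain p q where "\<beta> \<in> Od d" "\<gamma> \<in> Od d" "\<beta> - \<gamma> = of_nat n * lattice_point d p q"
      by (auto simp: congOd_def elim!: OdE)
    then have "\<gamma> - \<beta> = of_nat n * lattice_point d (- p) (- q)"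
      by (simp add: lattice_point_def algebra_simps)
    with \<open>\<beta> \<in> Od d\<close> \<open>\<gamma> \<in> Od d\<close> show "(\<gamma>, \<beta>) \<in> congOd d n"
      by (auto simp: congOd_def)
  qed
  show "trans (congOd d n)"
  proof (rule transI)
    fix \<beta> \<gamma> \<eta> assume "(\<beta>, \<gamma>) \<in> congOd d n" "(\<gamma>, \<eta>) \<in> congOd d n"
    then obtain p q p' q' where "\<beta> \<in> Od d" "\<eta> \<in> Od d"
      "\<beta> - \<gamma> = of_nat n * lattice_point d p q" "\<gamma> - \<eta> = of_nat n * lattice_point d p' q'"
      by (auto simp: congOd_def elim!: OdE)
    then have "\<beta> - \<eta> = of_nat n * lattice_point d (p + p') (q + q')"
      by (simp add: lattice_point_def algebra_simps)
    with \<open>\<beta> \<in> Od d\<close> \<open>\<eta> \<in> Od d\<close> show "(\<beta>, \<eta>) \<in> congOd d n"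
      by (auto simp: congOd_def)
  qed
qed

lemma congOd_lattice_point_iff:
  assumes "d > 0"
  shows "(lattice_point d x y, lattice_point d x' y') \<in> congOd d n \<longleftrightarrow>
           int n dvd x - x' \<and> int n dvd y - y'"
proof -
  have scale: "of_nat n * lattice_point d p q = lattice_point d (int n * p) (int n * q)" for p q
    by (simp add: lattice_point_def algebra_simps)
  have "(lattice_point d x y, lattice_point d x' y') \<in> congOd d n \<longleftrightarrow>
          (\<exists>p q. lattice_point d (x - x') (y - y') = lattice_point d (int n * p) (int n * q))"
    by (auto simp: congOd_def lattice_point_diff scale[symmetric] elim!: OdE)
  also have "\<dots> \<longleftrightarrow> int n dvd x - x' \<and> int n dvd y - y'"
    by (auto simp: lattice_point_eq_iff[OF assms] dvd_def)
  finally show ?thesis .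
qed

definition Od_class :: "nat \<Rightarrow> nat \<Rightarrow> int \<Rightarrow> int \<Rightarrow> complex set" where
  "Od_class d n x y = congOd d n `` {lattice_point d x y}"

lemma lattice_point_in_Od_class_iff:
  "d > 0 \<Longrightarrow> lattice_point d x' y' \<in> Od_class d n x y \<longleftrightarrow> int n dvd x - x' \<and> int n dvd y - y'"
  by (simp add: Od_class_def congOd_lattice_point_iff)

lemma bij_betw_Od_class:
  assumes "d > 0" "n > 0"
  shows "bij_betw (\<lambda>(x, y). Od_class d n x y) ({0..<int n} \<times> {0..<int n}) (Od d // congOd d n)"
proof (rule bij_betw_imageI)
  show "inj_on (\<lambda>(x, y). Od_class d n x y) ({0..<int n} \<times> {0..<int n})"
  proof (rule inj_onI, clarsimp)
    fix x y x' y' :: int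
    assume ranges: "0 \<le> x" "x < int n" "0 \<le> y" "y < int n" "0 \<le> x'" "x' < int n" "0 \<le> y'" "y' < int n"
      and "Od_class d n x y = Od_class d n x' y'"
    then have "lattice_point d x' y' \<in> Od_class d n x y"
      using lattice_point_in_Od_class_iff[OF assms(1), of x' y' n x' y'] by simp
    then have "int n dvd x - x'" "int n dvd y - y'"
      using lattice_point_in_Od_class_iff[OF assms(1)] by simp_all
    with ranges show "x = x' \<and> y = y'"
      using int_dvd_diff_imp_eq by blast
  qed
  show "(\<lambda>(x, y). Od_class d n x y) ` ({0..<int n} \<times> {0..<int n}) = Od d // congOd d n"
  proof (rule set_eqI, rule iffI)
    fix C assume "C \<in> (\<lambda>(x, y). Od_class d n x y) ` ({0..<int n} \<times> {0..<int n})"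
    then show "C \<in> Od d // congOd d n"
      by (auto simp: Od_class_def intro!: quotientI)
  next
    fix C assume "C \<in> Od d // congOd d n"
    then obtain x y where C: "C = congOd d n `` {lattice_point d x y}"
      by (auto elim!: quotientE OdE)
    have "(lattice_point d x y, lattice_point d (x mod int n) (y mod int n)) \<in> congOd d n"
      using congOd_lattice_point_iff[OF assms(1)] by (simp add: dvd_minus_mod)
    then have "C = Od_class d n (x mod int n) (y mod int n)"
      unfolding C Od_class_def by (rule equiv_class_eq[OF equiv_congOd])
    moreover have "(x mod int n, y mod int n) \<in> {0..<int n} \<times> {0..<int n}"
      using assms(2) by simp
    ultimately show "C \<in> (\<lambda>(x, y). Od_class d n x y) ` ({0..<int n} \<times> {0..<int n})"
      by force
  qed
qed

lemma Od_class_norm_cong_iff: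
  assumes "d > 0"
  shows "(\<exists>\<beta>\<in>Od_class d n x y. \<exists>m::int. \<beta> * cnj \<beta> + of_int D = of_int (int n * m))
           \<longleftrightarrow> int n dvd norm_form d x y + D"
proof
  assume "\<exists>\<beta>\<in>Od_class d n x y. \<exists>m::int. \<beta> * cnj \<beta> + of_int D = of_int (int n * m)"
  then obtain \<beta> m where \<beta>: "\<beta> \<in> Od_class d n x y" "\<beta> * cnj \<beta> + of_int D = of_int (int n * m)"
    by blast
  then obtain x' y' where "\<beta> = lattice_point d x' y'"
    by (auto simp: Od_class_def congOd_def elim: OdE)
  with \<beta> have mem: "lattice_point d x' y' \<in> Od_class d n x y"
    and "lattice_point d x' y' * cnj (lattice_point d x' y') + of_int D = of_int (int n * m)"
    by simp_all
  then have "norm_form d x' y' + D = int n * m"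
    unfolding lattice_point_mult_cnj by (metis of_int_add of_int_eq_iff)
  moreover have "int n dvd norm_form d x y - norm_form d x' y'"
    using mem lattice_point_in_Od_class_iff[OF assms] by (simp add: norm_form_diff_dvd)
  ultimately show "int n dvd norm_form d x y + D"
    by (metis diff_add_cancel dvd_add dvd_triv_left add_diff_eq)
next
  assume "int n dvd norm_form d x y + D"
  then obtain m where "lattice_point d x y * cnj (lattice_point d x y) + of_int D = of_int (int n * m)"
    unfolding lattice_point_mult_cnj by (metis dvdE of_int_add)
  moreover have "lattice_point d x y \<in> Od_class d n x y"
    using lattice_point_in_Od_class_iff[OF assms] by simp
  ultimately show "\<exists>\<beta>\<in>Od_class d n x y. \<exists>m::int. \<beta> * cnj \<beta> + of_int D = of_int (int n * m)"
    by blast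
qed

definition norm_residues :: "nat \<Rightarrow> int \<Rightarrow> nat \<Rightarrow> (int \<times> int) set" where
  "norm_residues d D n = {(x, y) \<in> {0..<int n} \<times> {0..<int n}. int n dvd norm_form d x y + D}"

lemma r_count_eq_card_norm_residues:
  assumes "d > 0" "n > 0"
  shows "r_count d D n = card (norm_residues d D n)"
proof -
  let ?cls = "\<lambda>(x, y). Od_class d n x y"
  let ?P = "\<lambda>C. \<exists>\<beta>\<in>C. \<exists>m::int. \<beta> * cnj \<beta> + of_int D = of_int (int n * m)"
  have bij: "bij_betw ?cls ({0..<int n} \<times> {0..<int n}) (Od d // congOd d n)"
    by (rule bij_betw_Od_class[OF assms])
  have residues: "norm_residues d D n = {p \<in> {0..<int n} \<times> {0..<int n}. ?P (?cls p)}"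
    unfolding norm_residues_def
  proof (rule Collect_cong, clarify)
    fix x y
    show "(x, y) \<in> {0..<int n} \<times> {0..<int n} \<and> int n dvd norm_form d x y + D \<longleftrightarrow>
          (x, y) \<in> {0..<int n} \<times> {0..<int n} \<and> ?P (Od_class d n x y)"
      by (simp only: Od_class_norm_cong_iff[OF assms(1)])
  qed
  have "{C \<in> Od d // congOd d n. ?P C} = ?cls ` norm_residues d D n"
    unfolding bij_betw_imp_surj_on[OF bij, symmetric] residues by (rule Compr_image_eq)
  moreover have "inj_on ?cls (norm_residues d D n)"
    unfolding residues by (rule inj_on_subset[OF bij_betw_imp_inj_on[OF bij] Collect_restrict])
  ultimately show ?thesis
    unfolding r_count_def by (simp add: card_image)
qed

section \<open>A polynomial bound for \<open>r(D, n)\<close>\<close>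

lemma finite_int_interval_Collect [simp]: "finite {x::int. a \<le> x \<and> x < b \<and> P x}"
  by (rule finite_subset[of _ "{a..<b}"]) auto

lemma card_dvd_linear_le:
  fixes m N c :: int
  assumes m: "m > 0" and N: "N \<ge> 0"
  shows "real (card {x \<in> {0..<N}. m dvd 2 * x + c}) \<le> 2 * N / m + 1"
proof -
  define A where "A = {x \<in> {0..<N}. m dvd 2 * x + c}"
  define f where "f x = (2 * x + c) div m" for x
  have f: "real_of_int (f x) = (2 * x + c) / m" if "x \<in> A" for x
  proof -
    have "2 * x + c = m * f x"
      using that by (simp add: A_def f_def)
    then show ?thesis
      using m by (simp add: field_simps flip: of_int_mult)
  qed
  define a where "a = \<lceil>c / m\<rceil>"
  define b where "b = \<lceil>(c + 2 * N) / m\<rceil>"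
  have "inj_on f A"
    using m by (intro inj_onI) (metis f divide_cancel_right of_int_eq_iff mult_cancel_left
        zero_neq_numeral of_int_0 less_irrefl add_right_cancel)
  moreover have "f ` A \<subseteq> {a..<b}"
  proof
    fix j assume "j \<in> f ` A"
    then obtain x where x: "x \<in> A" "j = f x" by auto
    then have "0 \<le> x" "x < N" by (auto simp: A_def)
    then have "c / m \<le> real_of_int j" "real_of_int j < (c + 2 * N) / m"
      using m by (auto simp: f x intro!: divide_right_mono divide_strict_right_mono)
    then have "a \<le> j" "j < b"
      unfolding a_def b_def by (simp_all add: ceiling_le_iff)
        (metis le_of_int_ceiling of_int_less_iff order.strict_trans2)
    then show "j \<in> {a..<b}"
      by simp
  qed
  ultimately have "card A \<le> nat (b - a)"
    by (metis card_atLeastLessThan_int card_image card_mono finite_atLeastLessThan_int)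
  moreover have "real (nat (b - a)) \<le> 2 * N / m + 1"
  proof (cases "a \<le> b")
    case True
    have "real_of_int b < (c + 2 * N) / m + 1" "c / m \<le> real_of_int a"
      unfolding a_def b_def by linarith+
    with True show ?thesis
      by (simp add: add_divide_distrib)
  qed (use m N in simp)
  ultimately show ?thesis
    unfolding A_def by linarith
qed

lemma card_dvd_mult_linear_le:
  fixes n u e :: int
  assumes n: "n > 0"
  shows "real (card {x \<in> {0..<n}. n dvd u * (2 * x + e)}) \<le> 2 * gcd n u + 1"
proof -
  define g where "g = gcd n u"
  define m where "m = n div g"
  have g: "g > 0" and nmg: "n = m * g" and ug: "u = (u div g) * g"
    using n by (simp_all add: g_def m_def)
  then have m: "m > 0"
    using n by (simp add: zero_less_mult_iff)
  have cop: "coprime m (u div g)"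
    unfolding m_def g_def using n by (intro div_gcd_coprime) auto
  have sub: "{x \<in> {0..<n}. n dvd u * (2 * x + e)} \<subseteq> {x \<in> {0..<n}. m dvd 2 * x + e}"
  proof safe
    fix x assume "n dvd u * (2 * x + e)"
    then have "m * g dvd ((u div g) * (2 * x + e)) * g"
      using nmg ug by (metis mult.assoc mult.commute)
    then have "m dvd (u div g) * (2 * x + e)"
      using g by simp
    then show "m dvd 2 * x + e"
      using cop by (simp add: coprime_dvd_mult_right_iff)
  qed
  have "card {x \<in> {0..<n}. n dvd u * (2 * x + e)} \<le> card {x \<in> {0..<n}. m dvd 2 * x + e}"
    using sub by (intro card_mono) auto
  also have "real \<dots> \<le> 2 * n / m + 1"
    using card_dvd_linear_le[OF m, of n e] n by simp
  also have "2 * n / m = 2 * g"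
    using nmg m by (simp add: field_simps)
  finally show ?thesis
    by (simp add: g_def)
qed

lemma card_multiples_lessThan:
  fixes g n :: nat
  assumes "g > 0" "g dvd n"
  shows "card {u \<in> {..<n}. g dvd u} = n div g"
proof -
  have "{u \<in> {..<n}. g dvd u} = (\<lambda>j. g * j) ` {..<n div g}"
    using assms by (auto elim!: dvdE simp: image_iff)
  moreover have "inj_on (\<lambda>j. g * j) {..<n div g}"
    using assms(1) by (auto intro: inj_onI)
  ultimately show ?thesis
    by (simp add: card_image)
qed

lemma sum_gcd_le_card_divisors:
  fixes n :: nat
  assumes n: "n > 0"
  shows "(\<Sum>u<n. gcd n u) \<le> n * card {g. g dvd n}"
proof -
  define Dv where "Dv = {g. g dvd n}"
  have fin: "finite Dv"
    unfolding Dv_def using n by (simp add: finite_divisors_nat)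
  have "(\<Sum>u<n. gcd n u) \<le> (\<Sum>u<n. \<Sum>g\<in>Dv. if g dvd u then g else 0)"
  proof (rule sum_mono)
    fix u
    have "(if gcd n u dvd u then gcd n u else 0) \<le> (\<Sum>g\<in>Dv. if g dvd u then g else 0)"
      by (intro member_le_sum fin) (auto simp: Dv_def)
    then show "gcd n u \<le> (\<Sum>g\<in>Dv. if g dvd u then g else 0)"
      by simp
  qed
  also have "\<dots> = (\<Sum>g\<in>Dv. g * card {u \<in> {..<n}. g dvd u})"
    by (subst sum.swap) (simp add: sum.If_cases Int_def mult.commute)
  also have "\<dots> = (\<Sum>g\<in>Dv. n)"
  proof (rule sum.cong)
    fix g assume "g \<in> Dv"
    then have "g dvd n" "g > 0"
      using n by (auto simp: Dv_def intro: Nat.gr0I)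
    then show "g * card {u \<in> {..<n}. g dvd u} = n"
      using card_multiples_lessThan[of g n] by simp
  qed simp
  also have "\<dots> = n * card Dv"
    by (simp add: mult.commute)
  finally show ?thesis
    by (simp add: Dv_def)
qed

text \<open>Divisors pair off as \<open>g \<leftrightarrow> n div g\<close>, and one member of each pair is at most \<open>\<surd>n\<close>.\<close>

lemma card_divisors_le_sqrt:
  fixes n :: nat
  assumes n: "n > 0"
  shows "real (card {g. g dvd n}) \<le> 2 * sqrt n"
proof -
  define small where "small = {g. g dvd n \<and> g * g \<le> n}"
  define large where "large = {g. g dvd n \<and> \<not> g * g \<le> n}"
  have "small \<subseteq> {1..nat \<lfloor>sqrt n\<rfloor>}"
  proof
    fix g assume "g \<in> small"
    then have "g dvd n" "real g * real g \<le> real n"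
      unfolding small_def of_nat_mult[symmetric] of_nat_le_iff by auto
    then show "g \<in> {1..nat \<lfloor>sqrt n\<rfloor>}"
      using n by (auto simp: real_le_rsqrt power2_eq_square le_nat_floor intro: Nat.gr0I)
  qed
  then have card_small: "card small \<le> nat \<lfloor>sqrt n\<rfloor>"
    using card_mono[of "{1..nat \<lfloor>sqrt n\<rfloor>}"] by simp
  have "inj_on (\<lambda>g. n div g) large"
    by (rule inj_on_inverseI[where g = "\<lambda>h. n div h"]) (use n in \<open>auto simp: large_def div_div_eq_right\<close>)
  moreover have "(\<lambda>g. n div g) ` large \<subseteq> small"
  proof safe
    fix g assume "g \<in> large"
    then obtain h where "n = g * h" "h * g < g * g"
      by (auto simp: large_def elim!: dvdE)
    then show "n div g \<in> small"
      using n by (auto simp: small_def intro: less_imp_le_nat)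
  qed
  moreover have "finite small"
    using n by (auto simp: small_def intro: finite_subset[OF _ finite_divisors_nat])
  ultimately have "card large \<le> card small"
    by (metis card_image card_mono)
  moreover have "card {g. g dvd n} \<le> card small + card large"
  proof -
    have "{g. g dvd n} = small \<union> large"
      by (auto simp: small_def large_def)
    then show ?thesis
      by (simp add: card_Un_le)
  qed
  ultimately have "card {g. g dvd n} \<le> 2 * nat \<lfloor>sqrt n\<rfloor>"
    using card_small by linarith
  then have "real (card {g. g dvd n}) \<le> 2 * real (nat \<lfloor>sqrt n\<rfloor>)"
    by (metis of_nat_le_iff of_nat_mult of_nat_numeral)
  moreover have "real_of_int \<lfloor>sqrt n\<rfloor> \<le> sqrt n"
    by (rule of_int_floor_le)
  ultimately show ?thesis
    by simp linarith
qed

definition quad_roots :: "nat \<Rightarrow> int \<Rightarrow> int \<Rightarrow> int set" where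
  "quad_roots n b c = {x \<in> {0..<int n}. int n dvd x\<^sup>2 + b * x + c}"

text \<open>The pair of roots \<open>(x, x + u)\<close> is determined by \<open>x\<close> and \<open>u mod n\<close>, and \<open>n\<close> divides
  \<open>(x + u)\<^sup>2 + b(x + u) - x\<^sup>2 - bx = u(2x + b + u)\<close>.\<close>

lemma card_quad_roots_sq_le:
  assumes n: "n > 0"
  shows "card (quad_roots n b c) ^ 2
           \<le> card (SIGMA u:{0..<int n}. {x \<in> {0..<int n}. int n dvd u * (2 * x + b + u)})"
proof -
  define T where "T = quad_roots n b c"
  define f where "f = (\<lambda>(x1, x2). ((x2 - x1) mod int n, x1))"
  have inj: "inj_on f (T \<times> T)"
  proof (rule inj_onI)
    fix p p' assume "p \<in> T \<times> T" "p' \<in> T \<times> T" "f p = f p'"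
    moreover obtain x1 x2 x1' x2' where "p = (x1, x2)" "p' = (x1', x2')"
      by fastforce
    ultimately have "x1 = x1'" "int n dvd x2 - x2'" "0 \<le> x2" "x2 < int n" "0 \<le> x2'" "x2' < int n"
      by (auto simp: f_def T_def quad_roots_def mod_eq_dvd_iff)
    with \<open>p = (x1, x2)\<close> \<open>p' = (x1', x2')\<close> show "p = p'"
      using int_dvd_diff_imp_eq by blast
  qed
  have img: "f ` (T \<times> T) \<subseteq> (SIGMA u:{0..<int n}. {x \<in> {0..<int n}. int n dvd u * (2 * x + b + u)})"
  proof (rule image_subsetI)
    fix p assume "p \<in> T \<times> T"
    then obtain x1 x2 where p: "p = (x1, x2)" and x: "x1 \<in> T" "x2 \<in> T"
      by auto
    define q where "q = (x2 - x1) div int n"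
    define u where "u = (x2 - x1) mod int n"
    have "int n dvd (x2\<^sup>2 + b * x2 + c) - (x1\<^sup>2 + b * x1 + c)"
      using x by (intro dvd_diff) (auto simp: T_def quad_roots_def)
    moreover have "u * (2 * x1 + b + u) = (x2\<^sup>2 + b * x2 + c) - (x1\<^sup>2 + b * x1 + c)
                     + int n * (int n * q * q - q * (2 * x2 + b))"
    proof -
      have "x2 = x1 + u + int n * q"
        by (simp add: u_def q_def)
      then show ?thesis
        by (simp add: algebra_simps power2_eq_square)
    qed
    ultimately have "int n dvd u * (2 * x1 + b + u)"
      by simp
    then show "f p \<in> (SIGMA u:{0..<int n}. {x \<in> {0..<int n}. int n dvd u * (2 * x + b + u)})"
      using n x by (auto simp: p f_def u_def T_def quad_roots_def)
  qed
  have "card T ^ 2 = card (f ` (T \<times> T))"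
    using inj by (simp add: card_image card_cartesian_product power2_eq_square)
  also have "\<dots> \<le> card (SIGMA u:{0..<int n}. {x \<in> {0..<int n}. int n dvd u * (2 * x + b + u)})"
    using img by (intro card_mono finite_SigmaI) auto
  finally show ?thesis
    unfolding T_def .
qed

lemma card_quad_roots_le:
  assumes n: "n > 0"
  shows "real (card (quad_roots n b c)) ^ 2 \<le> 5 * n * sqrt n"
proof -
  let ?S = "\<lambda>u. {x \<in> {0..<int n}. int n dvd u * (2 * x + b + u)}"
  have "real (card (quad_roots n b c)) ^ 2 \<le> real (card (SIGMA u:{0..<int n}. ?S u))"
    using card_quad_roots_sq_le[OF n, of b c] by (simp only: of_nat_le_iff flip: of_nat_power)
  also have "\<dots> = (\<Sum>u\<in>{0..<int n}. real (card (?S u)))"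
    by (subst card_SigmaI) auto
  also have "\<dots> \<le> (\<Sum>u\<in>{0..<int n}. 2 * real_of_int (gcd (int n) u) + 1)"
  proof (rule sum_mono)
    fix u
    show "real (card (?S u)) \<le> 2 * real_of_int (gcd (int n) u) + 1"
      using card_dvd_mult_linear_le[of "int n" u "b + u"] n by (simp add: add.assoc)
  qed
  also have "\<dots> = 2 * (\<Sum>u<n. real (gcd n u)) + n"
  proof -
    have "{0..<int n} = int ` {..<n}"
      by (metis atLeast0LessThan image_int_atLeastLessThan of_nat_0)
    then have "(\<Sum>u\<in>{0..<int n}. real_of_int (gcd (int n) u)) = (\<Sum>u<n. real (gcd n u))"
      by (simp add: sum.reindex)
    then show ?thesis
      by (simp add: sum.distrib flip: sum_distrib_left)
  qed
  also have "(\<Sum>u<n. real (gcd n u)) \<le> n * (2 * sqrt n)"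
  proof -
    have "(\<Sum>u<n. real (gcd n u)) \<le> real n * real (card {g. g dvd n})"
    proof -
      have "real (\<Sum>u<n. gcd n u) \<le> real (n * card {g. g dvd n})"
        using sum_gcd_le_card_divisors[OF n] by (simp only: of_nat_le_iff)
      then show ?thesis
        by simp
    qed
    also have "\<dots> \<le> n * (2 * sqrt n)"
      using card_divisors_le_sqrt[OF n] by (intro mult_left_mono) auto
    finally show ?thesis .
  qed
  finally have "real (card (quad_roots n b c)) ^ 2 \<le> 4 * n * sqrt n + n"
    by simp
  moreover have "real n \<le> n * sqrt n"
    using n by (simp add: mult_le_cancel_left1)
  ultimately show ?thesis
    by linarith
qed

lemma card_norm_residues_eq_sum:
  "card (norm_residues d D n)
     = (\<Sum>y\<in>{0..<int n}. card (quad_roots n (omega_tr d * y) (omega_nm d * y\<^sup>2 + D)))"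
proof -
  have "norm_form d x y + D = x\<^sup>2 + (omega_tr d * y * x + (omega_nm d * y\<^sup>2 + D))" for x y
    by (simp add: norm_form_def algebra_simps)
  then have "bij_betw (\<lambda>(y, x). (x, y))
      (SIGMA y:{0..<int n}. quad_roots n (omega_tr d * y) (omega_nm d * y\<^sup>2 + D)) (norm_residues d D n)"
    by (intro bij_betwI[where g = "\<lambda>(x, y). (y, x)"]) (auto simp: norm_residues_def quad_roots_def add.assoc)
  then show ?thesis
    by (simp add: bij_betw_same_card[symmetric] card_SigmaI quad_roots_def)
qed

lemma card_norm_residues_le:
  assumes n: "n > 0"
  shows "real (card (norm_residues d D n)) \<le> 3 * n powr (7/4)"
proof -
  have "real (card (quad_roots n b c)) \<le> 3 * n powr (3/4)" for b c
  proof (rule power2_le_imp_le)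
    have "real n powr (1 + 1/2) = real n powr 1 * real n powr (1/2)"
      by (rule powr_add)
    then have "real n powr (3/2) = n * sqrt n"
      by (simp add: powr_half_sqrt)
    then have "(3 * real n powr (3/4))\<^sup>2 = 9 * (n * sqrt n)"
      by (simp add: power2_eq_square flip: powr_add)
    moreover have "0 \<le> real n * sqrt n"
      by simp
    ultimately show "(real (card (quad_roots n b c)))\<^sup>2 \<le> (3 * real n powr (3/4))\<^sup>2"
      using card_quad_roots_le[OF n, of b c] by linarith
  qed simp
  then have "real (card (norm_residues d D n)) \<le> (\<Sum>y\<in>{0..<int n}. 3 * n powr (3/4))"
    unfolding card_norm_residues_eq_sum of_nat_sum by (intro sum_mono)
  also have "\<dots> = 3 * n powr (7/4)"
    using n by (simp add: powr_add[symmetric] powr_mult_base)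
  finally show ?thesis .
qed

lemma summable_r_count:
  assumes d: "d > 0" and s: "s \<ge> 2"
  shows "summable (\<lambda>m. real (r_count d D (Suc m)) * real (Suc m) powr (- s - 1))"
proof (rule summable_comparison_test')
  show "summable (\<lambda>m. 3 * real (Suc m) powr (-5/4))"
    using summable_real_powr_iff[of "-5/4"] by (subst summable_Suc_iff) simp
  fix m :: nat
  have "real (r_count d D (Suc m)) * real (Suc m) powr (- s - 1)
        \<le> 3 * real (Suc m) powr (7/4) * real (Suc m) powr (- s - 1)"
    using card_norm_residues_le[of "Suc m" d D]
    by (intro mult_right_mono) (simp_all add: r_count_eq_card_norm_residues[OF d])
  also have "\<dots> = 3 * real (Suc m) powr (7/4 - s - 1)"
    by (simp add: powr_add[symmetric] algebra_simps)
  also have "\<dots> \<le> 3 * real (Suc m) powr (-5/4)"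
    using s by (intro mult_left_mono powr_mono) auto
  finally show "norm (real (r_count d D (Suc m)) * real (Suc m) powr (- s - 1))
                  \<le> 3 * real (Suc m) powr (-5/4)"
    by simp
qed

section \<open>Integrals of radial bumps and of lattice periodizations\<close>

lemma nn_integral_lborel_translate:
  fixes f :: "'a::euclidean_space \<Rightarrow> ennreal"
  assumes [measurable]: "f \<in> borel_measurable borel"
  shows "(\<integral>\<^sup>+z. f (z + c) \<partial>lborel) = (\<integral>\<^sup>+z. f z \<partial>lborel)"
proof -
  have "(\<integral>\<^sup>+z. f z \<partial>lborel) = (\<integral>\<^sup>+z. f z \<partial>distr lborel borel ((+) c))"
    by (simp add: lborel_distr_plus)
  also have "\<dots> = (\<integral>\<^sup>+z. f (c + z) \<partial>lborel)"
    by (subst nn_integral_distr) auto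
  finally show ?thesis
    by (simp add: add.commute)
qed

lemma nn_integral_lborel_superlevel:
  fixes f :: "'a::euclidean_space \<Rightarrow> real"
  assumes f [measurable]: "f \<in> borel_measurable borel" and nonneg: "\<And>u. 0 \<le> f u"
  shows "(\<integral>\<^sup>+u. ennreal (f u) \<partial>lborel) = (\<integral>\<^sup>+t. emeasure lborel {u. 0 \<le> t \<and> t < f u} \<partial>lborel)"
proof -
  have "(\<lambda>(u, t). indicator {0..<f u} t :: ennreal) = indicator {p. 0 \<le> snd p \<and> snd p < f (fst p)}"
    by (auto simp: indicator_def fun_eq_iff)
  moreover have "{p \<in> space (lborel \<Otimes>\<^sub>M lborel). 0 \<le> snd p \<and> snd p < f (fst p)} \<in> sets (lborel \<Otimes>\<^sub>M lborel)"
    by measurable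
  ultimately have meas: "(\<lambda>(u, t). indicator {0..<f u} t :: ennreal) \<in> borel_measurable (lborel \<Otimes>\<^sub>M lborel)"
    by (simp add: space_pair_measure)
  have "(\<integral>\<^sup>+u. ennreal (f u) \<partial>lborel) = (\<integral>\<^sup>+u. (\<integral>\<^sup>+t. indicator {0..<f u} t \<partial>lborel) \<partial>lborel)"
    using nonneg by (intro nn_integral_cong) simp
  also have "\<dots> = (\<integral>\<^sup>+t. (\<integral>\<^sup>+u. indicator {0..<f u} t \<partial>lborel) \<partial>lborel)"
    using lborel_pair.Fubini'[OF meas] by simp
  also have "\<dots> = (\<integral>\<^sup>+t. emeasure lborel {u. 0 \<le> t \<and> t < f u} \<partial>lborel)"
  proof (rule nn_integral_cong)
    fix t :: real
    have "{u. 0 \<le> t \<and> t < f u} = {u \<in> space borel. 0 \<le> t \<and> t < f u}"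
      by simp
    also have "\<dots> \<in> sets borel"
      by measurable
    finally have "{u. 0 \<le> t \<and> t < f u} \<in> sets lborel"
      by simp
    moreover have "(\<integral>\<^sup>+u. indicator {0..<f u} t \<partial>lborel) = (\<integral>\<^sup>+u. indicator {u. 0 \<le> t \<and> t < f u} u \<partial>lborel)"
      by (intro nn_integral_cong) (simp add: indicator_def)
    ultimately show "(\<integral>\<^sup>+u. indicator {0..<f u} t \<partial>lborel) = emeasure lborel {u. 0 \<le> t \<and> t < f u}"
      by simp
  qed
  finally show ?thesis .
qed

lemma has_integral_diff_root:
  fixes A :: real
  assumes A: "A > 0" and k: "k > 0"
  shows "((\<lambda>t. A - root k t) has_integral A ^ (k + 1) / (k + 1)) {0..A ^ k}"
proof -
  define F where "F t = A * t - real k / (k + 1) * (t * root k t)" for t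
  have "((\<lambda>t. A - root k t) has_integral F (A ^ k) - F 0) {0..A ^ k}"
  proof (rule fundamental_theorem_of_calculus_interior)
    show "continuous_on {0..A ^ k} F"
      unfolding F_def by (intro continuous_intros)
    fix t assume "t \<in> {0<..<A ^ k}"
    then have t: "t > 0"
      by simp
    have pow: "root k t ^ (k - Suc 0) * root k t = t"
      using power_minus_mult[OF k, of "root k t"] t k by simp
    have "inverse (k * root k t ^ (k - Suc 0)) * (root k t ^ (k - Suc 0) * root k t) = root k t / k"
      using t k by (simp add: field_simps)
    then have inv: "inverse (k * root k t ^ (k - Suc 0)) * t = root k t / k"
      by (simp only: pow)
    have "((\<lambda>t. t * root k t) has_real_derivative root k t * (1 + 1 / k)) (at t)"
      by (rule DERIV_cong[OF DERIV_mult[OF DERIV_ident DERIV_real_root[OF k t]]])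
        (unfold inv, simp add: algebra_simps)
    then have "(F has_real_derivative A * 1 - real k / (k + 1) * (root k t * (1 + 1 / k))) (at t)"
      unfolding F_def by (intro DERIV_diff DERIV_cmult DERIV_ident)
    moreover have "real k / (k + 1) * (1 + 1 / k) = 1"
      using k by (simp add: divide_simps)
    then have "real k / (k + 1) * (root k t * (1 + 1 / k)) = root k t"
      by (simp only: mult.left_commute[of "real k / (k + 1)"] mult_1_right)
    ultimately show "(F has_vector_derivative A - root k t) (at t)"
      by (simp add: has_real_derivative_iff_has_vector_derivative)
  qed (use A in simp)
  moreover have "F (A ^ k) - F 0 = A ^ (k + 1) / (k + 1)"
    using A k by (simp add: F_def real_root_power_cancel field_simps)
  ultimately show ?thesis
    by simp
qed

definition bump :: "real \<Rightarrow> real \<Rightarrow> nat \<Rightarrow> complex \<Rightarrow> real" where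
  "bump A B k u = (max 0 (A - B * (cmod u)\<^sup>2)) ^ k"

lemma emeasure_bump_superlevel:
  assumes A: "A > 0" and B: "B > 0" and k: "k > 0" and t: "0 \<le> t" "t < A ^ k"
  shows "emeasure lborel {u. t < bump A B k u} = ennreal (pi / B * (A - root k t))"
proof -
  define r where "r = sqrt ((A - root k t) / B)"
  have "root k t < root k (A ^ k)"
    using t k by simp
  then have "root k t < A"
    using A k by (simp add: real_root_power_cancel)
  then have r2: "r\<^sup>2 = (A - root k t) / B" and r: "r \<ge> 0"
    using B by (simp_all add: r_def)
  have root_t: "root k t \<ge> 0"
    using t(1) by (rule real_root_ge_zero)
  have "t < bump A B k u \<longleftrightarrow> cmod u < r" for u
  proof -
    have "t < bump A B k u \<longleftrightarrow> root k t < root k (bump A B k u)"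
      using k by simp
    also have "root k (bump A B k u) = max 0 (A - B * (cmod u)\<^sup>2)"
      unfolding bump_def using k by (simp add: real_root_power_cancel)
    also have "root k t < max 0 (A - B * (cmod u)\<^sup>2) \<longleftrightarrow> (cmod u)\<^sup>2 * B < A - root k t"
      using root_t by (auto simp: less_max_iff_disj algebra_simps)
    also have "\<dots> \<longleftrightarrow> (cmod u)\<^sup>2 < r\<^sup>2"
      unfolding r2 by (simp add: pos_less_divide_eq[OF B])
    also have "\<dots> \<longleftrightarrow> cmod u < r"
      using r by (simp flip: not_le)
    finally show ?thesis .
  qed
  then have "{u. t < bump A B k u} = ball 0 r"
    by (simp add: set_eq_iff mem_ball_0)
  then show ?thesis
    using r by (simp add: emeasure_ball unit_ball_vol_2 r2)
qed

lemma bump_le: "A \<ge> 0 \<Longrightarrow> B \<ge> 0 \<Longrightarrow> bump A B k u \<le> A ^ k"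
  unfolding bump_def by (intro power_mono) auto

lemma nn_integral_bump:
  assumes A: "A > 0" and B: "B > 0" and k: "k > 0"
  shows "(\<integral>\<^sup>+u. ennreal (bump A B k u) \<partial>lborel) = ennreal (pi * A ^ (k + 1) / (B * (k + 1)))"
proof -
  have [measurable]: "bump A B k \<in> borel_measurable borel"
    unfolding bump_def by (intro borel_measurable_continuous_onI continuous_intros)
  have "emeasure lborel {u. 0 \<le> t \<and> t < bump A B k u}
          = ennreal (pi / B * (A - root k t)) * indicator {0..A ^ k} t" for t
  proof (cases "0 \<le> t \<and> t < A ^ k")
    case True
    then show ?thesis
      using emeasure_bump_superlevel[OF A B k] by simp
  next
    case False
    have "\<not> (0 \<le> t \<and> t < bump A B k u)" for u
      using False bump_le[of A B k u] A B by linarith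
    then have "{u. 0 \<le> t \<and> t < bump A B k u} = {}"
      by blast
    moreover have "t \<in> {0..A ^ k} \<Longrightarrow> t = A ^ k"
      using False by auto
    ultimately show ?thesis
      using A k by (auto simp: real_root_power_cancel indicator_def)
  qed
  then have "(\<integral>\<^sup>+u. ennreal (bump A B k u) \<partial>lborel)
               = (\<integral>\<^sup>+t. ennreal (pi / B * (A - root k t)) * indicator {0..A ^ k} t \<partial>lborel)"
    by (subst nn_integral_lborel_superlevel) (simp_all add: bump_def)
  also have "\<dots> = ennreal (pi / B * (A ^ (k + 1) / (k + 1)))"
  proof (rule nn_integral_has_integral_lebesgue')
    show "((\<lambda>t. pi / B * (A - root k t)) has_integral pi / B * (A ^ (k + 1) / (k + 1))) {0..A ^ k}"
      using has_integral_diff_root[OF A k] by (rule has_integral_mult_right)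
    fix t assume "t \<in> {0..A ^ k}"
    then have "root k t \<le> root k (A ^ k)"
      using k by simp
    then show "0 \<le> pi / B * (A - root k t)"
      using A B k by (simp add: real_root_power_cancel)
  qed
  finally show ?thesis
    by (simp add: field_simps)
qed

lemma Par_sets_borel:
  assumes "d > 0"
  shows "Par d \<in> sets borel"
proof -
  have "{z \<in> space borel. 0 \<le> coord1 d z \<and> coord1 d z < 1 \<and> 0 \<le> coord2 d z \<and> coord2 d z < 1} \<in> sets borel"
    unfolding coord1_def coord2_def by measurable
  then show ?thesis
    by (simp add: Par_eq_coords[OF assms])
qed

lemma floor_shift_unit_interval_iff: "0 \<le> x + of_int p \<and> x + of_int p < 1 \<longleftrightarrow> p = - \<lfloor>x::real\<rfloor>"
  using floor_eq_iff[of "x + of_int p" 0] by auto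

lemma nn_integral_lattice_translates_in_Par:
  assumes "d > 0"
  shows "(\<integral>\<^sup>+pq. indicator (Par d) (z + lattice_point d (fst pq) (snd pq)) \<partial>count_space UNIV) = 1"
proof -
  have "z + lattice_point d p q \<in> Par d \<longleftrightarrow>
          (0 \<le> coord1 d z + of_int p \<and> coord1 d z + of_int p < 1) \<and>
          (0 \<le> coord2 d z + of_int q \<and> coord2 d z + of_int q < 1)" for p q
    using assms by (simp add: Par_eq_coords coord1_add coord2_add)
  then have "indicator (Par d) (z + lattice_point d (fst pq) (snd pq))
          = (indicator {(- \<lfloor>coord1 d z\<rfloor>, - \<lfloor>coord2 d z\<rfloor>)} pq :: ennreal)" for pq
    unfolding floor_shift_unit_interval_iff by (cases pq) (simp add: indicator_def)
  then show ?thesis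
    by simp
qed

lemma nn_integral_Par_periodization:
  fixes g :: "complex \<Rightarrow> ennreal"
  assumes d: "d > 0" and [measurable]: "g \<in> borel_measurable borel"
  shows "(\<integral>\<^sup>+pq. (\<integral>\<^sup>+z. g (z - lattice_point d (fst pq) (snd pq)) * indicator (Par d) z \<partial>lborel)
            \<partial>count_space UNIV) = (\<integral>\<^sup>+z. g z \<partial>lborel)"
proof -
  note Par_sets_borel[OF d, measurable]
  have "(\<integral>\<^sup>+z. g (z - lattice_point d p q) * indicator (Par d) z \<partial>lborel)
        = (\<integral>\<^sup>+z. g z * indicator (Par d) (z + lattice_point d p q) \<partial>lborel)" for p q
    using nn_integral_lborel_translate[of "\<lambda>z. g (z - lattice_point d p q) * indicator (Par d) z"
        "lattice_point d p q"] by simp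
  then have "(\<integral>\<^sup>+pq. (\<integral>\<^sup>+z. g (z - lattice_point d (fst pq) (snd pq)) * indicator (Par d) z \<partial>lborel)
                \<partial>count_space UNIV)
      = (\<integral>\<^sup>+pq. (\<integral>\<^sup>+z. g z * indicator (Par d) (z + lattice_point d (fst pq) (snd pq)) \<partial>lborel)
                \<partial>count_space UNIV)"
    by simp
  also have "\<dots> = (\<integral>\<^sup>+z. g z * (\<integral>\<^sup>+pq. indicator (Par d) (z + lattice_point d (fst pq) (snd pq))
                                      \<partial>count_space UNIV) \<partial>lborel)"
    by (simp add: nn_integral_cmult flip: nn_integral_count_space_nn_integral)
  also have "\<dots> = (\<integral>\<^sup>+z. g z \<partial>lborel)"
    by (simp add: nn_integral_lattice_translates_in_Par[OF d])
  finally show ?thesis .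
qed

lemma infsum_nonneg_eq_enn2real:
  fixes f :: "'a \<Rightarrow> real"
  assumes nonneg: "\<And>x. x \<in> A \<Longrightarrow> 0 \<le> f x"
  shows "infsum f A = enn2real (\<integral>\<^sup>+x. ennreal (f x) \<partial>count_space A)"
proof (cases "f summable_on A")
  case True
  then have "(\<lambda>x. norm (f x)) summable_on A"
    using True nonneg by (metis (no_types, lifting) real_norm_def abs_of_nonneg summable_on_cong)
  note abs = abs_summable_equivalent[of f A, THEN iffD1, OF this]
  have "(\<integral>\<^sup>+x. ennreal (f x) \<partial>count_space A) = ennreal (infsum f A)"
    using nn_integral_conv_infsetsum[OF abs nonneg] infsetsum_infsum[OF abs] by simp
  then show ?thesis
    using nonneg by (simp add: infsum_nonneg)
next
  case False
  have "(\<integral>\<^sup>+x. ennreal (f x) \<partial>count_space A) = \<infinity>"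
  proof (rule ccontr)
    assume "(\<integral>\<^sup>+x. ennreal (f x) \<partial>count_space A) \<noteq> \<infinity>"
    moreover have "(\<integral>\<^sup>+x. ennreal (norm (f x)) \<partial>count_space A) = (\<integral>\<^sup>+x. ennreal (f x) \<partial>count_space A)"
      using nonneg by (intro nn_integral_cong) simp
    ultimately have "integrable (count_space A) f"
      by (intro integrableI_bounded) (simp_all add: less_top)
    then have "(\<lambda>x. norm (f x)) summable_on A"
      using abs_summable_equivalent[of f A] by (simp add: abs_summable_on_def)
    then have "f summable_on A"
      by (rule abs_summable_summable)
    with False show False
      by simp
  qed
  then show ?thesis
    using False by (simp add: infsum_def)
qed

lemma borel_measurable_nn_integral_count_space:
  fixes f :: "'i \<Rightarrow> 'a \<Rightarrow> ennreal"
  assumes I: "countable I" and meas: "\<And>i. i \<in> I \<Longrightarrow> f i \<in> borel_measurable M"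
  shows "(\<lambda>x. \<integral>\<^sup>+i. f i x \<partial>count_space I) \<in> borel_measurable M"
proof (cases "finite I")
  case True
  then show ?thesis
    using meas by (simp add: nn_integral_count_space_finite)
next
  case False
  then have "I \<noteq> {}"
    by auto
  have "(\<lambda>x. \<integral>\<^sup>+i. f i x \<partial>count_space I) = (\<lambda>x. \<Sum>n. f (from_nat_into I n) x)"
    using bij_betw_from_nat_into[OF I False]
    by (simp add: nn_integral_bij_count_space[symmetric] nn_integral_count_space_nat)
  moreover have [measurable]: "f (from_nat_into I n) \<in> borel_measurable M" for n
    using meas from_nat_into[OF \<open>I \<noteq> {}\<close>] by auto
  ultimately show ?thesis
    by simp
qed

text \<open>\<open>infsum\<close> is \<open>0\<close> where the family is not summable; finiteness of the Lebesgue integral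
  confines this to a null set.\<close>

lemma has_integral_infsum_nonneg:
  fixes g :: "'a::euclidean_space \<Rightarrow> 'i \<Rightarrow> real"
  assumes I: "countable I" and g_meas: "\<And>i. i \<in> I \<Longrightarrow> (\<lambda>z. g z i) \<in> borel_measurable borel"
    and nonneg: "\<And>z i. i \<in> I \<Longrightarrow> 0 \<le> g z i" and S [measurable]: "S \<in> sets borel" and V: "V \<ge> 0"
    and int: "(\<integral>\<^sup>+z. (\<integral>\<^sup>+i. ennreal (g z i) \<partial>count_space I) * indicator S z \<partial>lborel) = ennreal V"
  shows "((\<lambda>z. infsum (g z) I) has_integral V) S"
proof -
  define G where "G z = (\<integral>\<^sup>+i. ennreal (g z i) \<partial>count_space I)" for z
  have [measurable]: "G \<in> borel_measurable borel"
    unfolding G_def using I g_meas by (intro borel_measurable_nn_integral_count_space) auto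
  have infsum_eq: "infsum (g z) I = enn2real (G z)" for z
    unfolding G_def using nonneg by (rule infsum_nonneg_eq_enn2real)
  have "(\<lambda>z. G z * indicator S z) \<in> borel_measurable lborel"
    by measurable
  then have "AE z in lborel. G z * indicator S z \<noteq> \<infinity>"
    using int unfolding G_def by (intro nn_integral_PInf_AE) auto
  then have "AE z in lborel. ennreal (infsum (g z) I * indicator S z) = G z * indicator S z"
  proof (rule AE_mp, intro AE_I2 impI)
    fix z assume "G z * indicator S z \<noteq> \<infinity>"
    then show "ennreal (infsum (g z) I * indicator S z) = G z * indicator S z"
      by (cases "z \<in> S") (simp_all add: infsum_eq top.not_eq_extremum)
  qed
  then have "(\<integral>\<^sup>+z. ennreal (infsum (g z) I * indicator S z) \<partial>lborel) = ennreal V"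
    unfolding int[folded G_def, symmetric] by (rule nn_integral_cong_AE)
  moreover have "(\<lambda>z. infsum (g z) I * indicator S z) \<in> borel_measurable lborel"
    unfolding infsum_eq by measurable
  ultimately have "((\<lambda>z. infsum (g z) I * indicator S z) has_integral V) UNIV"
    using V nonneg by (intro nn_integral_has_integral) (auto simp: infsum_eq)
  moreover have "(\<lambda>z. infsum (g z) I * indicator S z) = (\<lambda>z. if z \<in> S then infsum (g z) I else 0)"
    by (auto simp: indicator_def)
  ultimately show ?thesis
    by (simp add: has_integral_restrict_UNIV)
qed

section \<open>The terms of \<open>H\<^sub>k\<^sub>,\<^sub>\<Delta>\<close> as lattice translates of one bump\<close>

definition H_index :: "nat \<Rightarrow> int \<Rightarrow> (int \<times> complex \<times> int) set" where
  "H_index d \<Delta> = {(a, b, c). b \<in> Od d \<and> b * cnj b - of_int (a * c) = of_int \<Delta> \<and> a < 0}"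

definition H_term :: "nat \<Rightarrow> complex \<Rightarrow> int \<times> complex \<times> int \<Rightarrow> real" where
  "H_term k z = (\<lambda>(a, b, c).
     max 0 ((Re (of_int a * complex_of_real ((cmod z)\<^sup>2) + b * z + cnj b * cnj z + of_int c)) ^ k))"

lemma Hfun_eq_infsum: "Hfun d k \<Delta> z = infsum (H_term k z) (H_index d \<Delta>)"
  by (simp add: Hfun_def H_term_def H_index_def)

text \<open>A term with \<open>a = -n\<close> is fixed by \<open>\<beta> = cnj b\<close>, a solution of \<open>\<beta> cnj \<beta> \<equiv> \<Delta> (mod n)\<close>;
  we write \<open>\<beta> = \<beta>\<^sub>0 + n \<lambda>\<close> with \<open>\<beta>\<^sub>0\<close> a residue with coordinates in \<open>[0, n)\<close> and
  \<open>\<lambda> \<in> O\<^sub>d\<close>, and index \<open>n\<close> by \<open>m = n - 1\<close>.\<close>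

definition H_params :: "nat \<Rightarrow> int \<Rightarrow> (nat \<times> (int \<times> int) \<times> (int \<times> int)) set" where
  "H_params d \<Delta> = (SIGMA m:UNIV. norm_residues d (- \<Delta>) (Suc m) \<times> UNIV)"

definition H_param :: "nat \<Rightarrow> int \<Rightarrow> nat \<times> (int \<times> int) \<times> (int \<times> int) \<Rightarrow> int \<times> complex \<times> int" where
  "H_param d \<Delta> = (\<lambda>(m, (x0, y0), (p, q)).
     let n = int (Suc m); x = x0 + n * p; y = y0 + n * q
     in (- n, cnj (lattice_point d x y), (\<Delta> - norm_form d x y) div n))"

lemma neg_cnj_lattice_point_in_H_index_iff:
  assumes "n > 0"
  shows "(- n, cnj (lattice_point d x y), c) \<in> H_index d \<Delta> \<longleftrightarrow> norm_form d x y + n * c = \<Delta>"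
proof -
  have "cnj (lattice_point d x y) * cnj (cnj (lattice_point d x y)) - of_int (- n * c)
          = (of_int (norm_form d x y + n * c) :: complex)"
    using lattice_point_mult_cnj[of d x y] by (simp add: mult.commute)
  moreover have "cnj (lattice_point d x y) \<in> Od d"
    by (simp add: cnj_lattice_point)
  ultimately show ?thesis
    using assms unfolding H_index_def by (simp only: mem_Collect_eq prod.case of_int_eq_iff) simp
qed

lemma mod_div_add_mult_self:
  fixes x0 p n :: int
  assumes "0 \<le> x0" "x0 < n"
  shows "(x0 + n * p) mod n = x0" and "(x0 + n * p) div n = p"
  using assms by simp_all

lemma dvd_norm_form_mod_iff:
  "int n dvd norm_form d (x mod int n) (y mod int n) + D \<longleftrightarrow> int n dvd norm_form d x y + D"
proof -
  have "int n dvd norm_form d (x mod int n) (y mod int n) - norm_form d x y"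
    by (rule norm_form_diff_dvd) (simp_all add: dvd_diff_commute[of _ "_ mod _"] dvd_minus_mod)
  moreover have "norm_form d (x mod int n) (y mod int n) + D
                   = (norm_form d (x mod int n) (y mod int n) - norm_form d x y) + (norm_form d x y + D)"
    by simp
  ultimately show ?thesis
    by (simp only: dvd_add_right_iff)
qed

lemma H_param_apply:
  "H_param d \<Delta> (m, (x0, y0), (p, q)) =
     (- int (Suc m), cnj (lattice_point d (x0 + int (Suc m) * p) (y0 + int (Suc m) * q)),
      (\<Delta> - norm_form d (x0 + int (Suc m) * p) (y0 + int (Suc m) * q)) div int (Suc m))"
  by (simp add: H_param_def Let_def)

lemma H_param_in_H_index:
  assumes "(m, (x0, y0), (p, q)) \<in> H_params d \<Delta>"
  shows "H_param d \<Delta> (m, (x0, y0), (p, q)) \<in> H_index d \<Delta>"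
proof -
  define n where "n = int (Suc m)"
  define x where "x = x0 + n * p"
  define y where "y = y0 + n * q"
  have n: "n > 0"
    by (simp add: n_def)
  have "0 \<le> x0" "x0 < n" "0 \<le> y0" "y0 < n" "n dvd norm_form d x0 y0 + - \<Delta>"
    using assms by (simp_all add: H_params_def norm_residues_def n_def)
  then have "n dvd norm_form d x y + - \<Delta>"
    using dvd_norm_form_mod_iff[of "Suc m" d x y "- \<Delta>"]
    unfolding n_def[symmetric] by (simp add: x_def y_def mod_div_add_mult_self)
  then have "norm_form d x y + n * ((\<Delta> - norm_form d x y) div n) = \<Delta>"
    by (simp add: dvd_diff_commute)
  then show ?thesis
    unfolding H_param_apply n_def[symmetric] x_def[symmetric] y_def[symmetric]
    by (simp only: neg_cnj_lattice_point_in_H_index_iff[OF n])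
qed

lemma inj_on_H_param:
  assumes "d > 0"
  shows "inj_on (H_param d \<Delta>) (H_params d \<Delta>)"
proof (rule inj_onI)
  fix u u' assume "u \<in> H_params d \<Delta>" "u' \<in> H_params d \<Delta>" "H_param d \<Delta> u = H_param d \<Delta> u'"
  moreover obtain m x0 y0 p q m' x0' y0' p' q'
    where "u = (m, (x0, y0), (p, q))" "u' = (m', (x0', y0'), (p', q'))"
    by (cases u, cases u') auto
  ultimately have u: "(m, (x0, y0), (p, q)) \<in> H_params d \<Delta>" "(m', (x0', y0'), (p', q')) \<in> H_params d \<Delta>"
    and eq: "H_param d \<Delta> (m, (x0, y0), (p, q)) = H_param d \<Delta> (m', (x0', y0'), (p', q'))"
    and uu': "u = (m, (x0, y0), (p, q))" "u' = (m', (x0', y0'), (p', q'))"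
    by simp_all
  define n where "n = int (Suc m)"
  have m: "m' = m"
    using eq by (simp add: H_param_apply)
  then have "x0 + n * p = x0' + n * p'" "y0 + n * q = y0' + n * q'"
    using eq unfolding H_param_apply n_def[symmetric] by (simp_all add: lattice_point_eq_iff[OF assms])
  then have "(x0 + n * p) mod n = (x0' + n * p') mod n" "(x0 + n * p) div n = (x0' + n * p') div n"
    "(y0 + n * q) mod n = (y0' + n * q') mod n" "(y0 + n * q) div n = (y0' + n * q') div n"
    by simp_all
  moreover have "0 \<le> x0" "x0 < n" "0 \<le> y0" "y0 < n" "0 \<le> x0'" "x0' < n" "0 \<le> y0'" "y0' < n"
    using u by (simp_all add: H_params_def norm_residues_def n_def m)
  ultimately show "u = u'"
    unfolding uu' using m by (simp only: mod_div_add_mult_self)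
qed

lemma H_index_subset_image_H_param:
  assumes "d > 0"
  shows "H_index d \<Delta> \<subseteq> H_param d \<Delta> ` H_params d \<Delta>"
proof
  fix t assume t: "t \<in> H_index d \<Delta>"
  then obtain a b c where abc: "t = (a, b, c)" "b \<in> Od d" "a < 0"
    by (auto simp: H_index_def)
  then obtain x' y' where "b = lattice_point d x' y'"
    by (auto elim: OdE)
  then have "b = cnj (lattice_point d (x' + omega_tr d * y') (- y'))"
    by (simp flip: cnj_lattice_point)
  then obtain x y where b: "b = cnj (lattice_point d x y)"
    by blast
  define m where "m = nat (- a) - 1"
  define n where "n = int (Suc m)"
  have n: "n > 0" and a: "a = - n"
    using abc(3) by (simp_all add: n_def m_def)
  then have nc: "norm_form d x y + n * c = \<Delta>"
    using t unfolding abc b by (simp add: neg_cnj_lattice_point_in_H_index_iff)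
  then have "norm_form d x y + - \<Delta> = n * (- c)"
    by (simp add: algebra_simps)
  then have "int (Suc m) dvd norm_form d x y + - \<Delta>"
    unfolding n_def by (rule dvdI)
  then have in_params: "(m, (x mod n, y mod n), (x div n, y div n)) \<in> H_params d \<Delta>"
    using dvd_norm_form_mod_iff[of "Suc m" d x y "- \<Delta>"] n
    unfolding n_def by (simp add: H_params_def norm_residues_def)
  have "\<Delta> - norm_form d x y = n * c"
    using nc by (simp add: algebra_simps)
  then have "H_param d \<Delta> (m, (x mod n, y mod n), (x div n, y div n)) = t"
    using n unfolding H_param_apply n_def[symmetric] by (simp add: abc a b)
  then show "t \<in> H_param d \<Delta> ` H_params d \<Delta>"
    by (rule rev_image_eqI[OF in_params sym])
qed

lemma bij_betw_H_param:
  assumes "d > 0"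
  shows "bij_betw (H_param d \<Delta>) (H_params d \<Delta>) (H_index d \<Delta>)"
proof -
  have "H_param d \<Delta> u \<in> H_index d \<Delta>" if "u \<in> H_params d \<Delta>" for u
    using that H_param_in_H_index by (cases u) auto
  then show ?thesis
    unfolding bij_betw_def using inj_on_H_param[OF assms] H_index_subset_image_H_param[OF assms]
    by blast
qed

lemma Re_quadratic_eq_complete_square:
  fixes z \<beta> :: complex and n c \<Delta> :: real
  assumes n: "n > 0" and c: "(cmod \<beta>)\<^sup>2 + n * c = \<Delta>"
  shows "Re (of_real (- n) * of_real ((cmod z)\<^sup>2) + cnj \<beta> * z + \<beta> * cnj z + of_real c)
           = \<Delta> / n - n * (cmod (z - \<beta> / of_real n))\<^sup>2"
proof -
  have "(cmod (z - \<beta> / of_real n))\<^sup>2 = (Re z - Re \<beta> / n)\<^sup>2 + (Im z - Im \<beta> / n)\<^sup>2"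
    by (simp add: cmod_power2)
  also have "\<dots> = (Re z)\<^sup>2 + (Im z)\<^sup>2 - 2 * (Re z * Re \<beta> + Im z * Im \<beta>) / n
                       + ((Re \<beta>)\<^sup>2 + (Im \<beta>)\<^sup>2) / n\<^sup>2"
    using n by (simp add: field_simps power2_eq_square)
  finally have square: "(cmod (z - \<beta> / of_real n))\<^sup>2
      = (Re z)\<^sup>2 + (Im z)\<^sup>2 - 2 * (Re z * Re \<beta> + Im z * Im \<beta>) / n + (cmod \<beta>)\<^sup>2 / n\<^sup>2"
    by (simp add: cmod_power2)
  have c_eq: "c = \<Delta> / n - (cmod \<beta>)\<^sup>2 / n"
    using c n by (simp add: field_simps)
  show ?thesis
    unfolding square c_eq cmod_power2[of z] using n by (simp add: field_simps power2_eq_square)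
qed

lemma max_zero_power_odd:
  fixes v :: real
  assumes "odd k"
  shows "max 0 (v ^ k) = (max 0 v) ^ k"
proof (cases "v \<ge> 0")
  case False
  moreover have "k > 0"
    using assms by (auto intro: Nat.gr0I)
  ultimately show ?thesis
    using assms by (simp add: power_less_zero_eq)
qed simp

lemma H_term_H_param:
  assumes k: "odd k" and u: "(m, (x0, y0), (p, q)) \<in> H_params d \<Delta>"
  shows "H_term k z (H_param d \<Delta> (m, (x0, y0), (p, q)))
           = bump (\<Delta> / Suc m) (Suc m) k (z - lattice_point d p q - lattice_point d x0 y0 / of_nat (Suc m))"
proof -
  define n where "n = int (Suc m)"
  define \<beta> where "\<beta> = lattice_point d (x0 + n * p) (y0 + n * q)"
  define c where "c = (\<Delta> - norm_form d (x0 + n * p) (y0 + n * q)) div n"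
  have param: "H_param d \<Delta> (m, (x0, y0), (p, q)) = (- n, cnj \<beta>, c)"
    unfolding H_param_apply n_def[symmetric] \<beta>_def c_def ..
  have "complex_of_real ((cmod \<beta>)\<^sup>2) = of_real (of_int (norm_form d (x0 + n * p) (y0 + n * q)))"
    by (simp only: complex_norm_square \<beta>_def lattice_point_mult_cnj of_real_of_int_eq)
  then have norm_sq: "(cmod \<beta>)\<^sup>2 = of_int (norm_form d (x0 + n * p) (y0 + n * q))"
    by (simp only: of_real_eq_iff)
  have "n > 0"
    by (simp add: n_def)
  then have "norm_form d (x0 + n * p) (y0 + n * q) + n * c = \<Delta>"
    using H_param_in_H_index[OF u] unfolding param \<beta>_def by (simp only: neg_cnj_lattice_point_in_H_index_iff)
  then have "(cmod \<beta>)\<^sup>2 + real_of_int n * real_of_int c = real_of_int \<Delta>"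
    unfolding norm_sq by (simp flip: of_int_mult of_int_add)
  then have "Re (of_real (- real_of_int n) * of_real ((cmod z)\<^sup>2) + cnj \<beta> * z + \<beta> * cnj z + of_real (real_of_int c))
      = \<Delta> / n - n * (cmod (z - \<beta> / of_real (real_of_int n)))\<^sup>2"
    by (intro Re_quadratic_eq_complete_square) (simp_all add: n_def)
  moreover have "\<beta> / of_real (real_of_int n) = lattice_point d p q + lattice_point d x0 y0 / of_nat (Suc m)"
    unfolding \<beta>_def lattice_point_add_mult n_def by (simp add: field_simps del: of_nat_Suc)
  ultimately have "Re (of_int (- n) * of_real ((cmod z)\<^sup>2) + cnj \<beta> * z + cnj (cnj \<beta>) * cnj z + of_int c)
      = \<Delta> / Suc m - Suc m * (cmod (z - lattice_point d p q - lattice_point d x0 y0 / of_nat (Suc m)))\<^sup>2"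
    by (simp add: n_def diff_diff_eq del: of_nat_Suc)
  then show ?thesis
    unfolding param H_term_def bump_def by (simp only: prod.case max_zero_power_odd[OF k])
qed

section \<open>Integrating \<open>H\<^sub>k\<^sub>,\<^sub>\<Delta>\<close> over the fundamental parallelogram\<close>

lemma nn_integral_Par_H_residue:
  assumes d: "d > 0" and \<Delta>: "\<Delta> > 0" and k: "odd k"
    and r: "(x0, y0) \<in> norm_residues d (- \<Delta>) (Suc m)"
  shows "(\<integral>\<^sup>+pq. (\<integral>\<^sup>+z. ennreal (H_term k z (H_param d \<Delta> (m, (x0, y0), pq))) * indicator (Par d) z \<partial>lborel)
            \<partial>count_space UNIV)
         = ennreal (pi * (\<Delta> / Suc m) ^ (k + 1) / (real (Suc m) * real (k + 1)))"
proof -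
  define w where "w = lattice_point d x0 y0 / of_nat (Suc m)"
  define g where "g v = ennreal (bump (\<Delta> / Suc m) (Suc m) k (v - w))" for v
  have bump_borel: "(\<lambda>v. ennreal (bump A B k (v - c))) \<in> borel_measurable borel" for A B c
    unfolding bump_def by (intro measurable_compose[OF _ measurable_ennreal] borel_measurable_continuous_onI
        continuous_intros)
  have "(m, (x0, y0), pq) \<in> H_params d \<Delta>" for pq
    using r by (simp add: H_params_def)
  then have "H_term k z (H_param d \<Delta> (m, (x0, y0), pq)) = bump (\<Delta> / Suc m) (Suc m) k (z - lattice_point d (fst pq) (snd pq) - w)"
    for z pq
    using H_term_H_param[OF k] by (cases pq) (simp add: w_def)
  then have "(\<integral>\<^sup>+pq. (\<integral>\<^sup>+z. ennreal (H_term k z (H_param d \<Delta> (m, (x0, y0), pq))) * indicator (Par d) z \<partial>lborel)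
               \<partial>count_space UNIV)
      = (\<integral>\<^sup>+pq. (\<integral>\<^sup>+z. g (z - lattice_point d (fst pq) (snd pq)) * indicator (Par d) z \<partial>lborel) \<partial>count_space UNIV)"
    by (simp add: g_def)
  also have "\<dots> = (\<integral>\<^sup>+z. g z \<partial>lborel)"
    by (rule nn_integral_Par_periodization[OF d]) (simp add: g_def bump_borel)
  also have "\<dots> = (\<integral>\<^sup>+z. ennreal (bump (\<Delta> / Suc m) (Suc m) k z) \<partial>lborel)"
    using nn_integral_lborel_translate[OF bump_borel[of "\<Delta> / Suc m" "Suc m" 0], where c = "- w"] by (simp add: g_def)
  also have "\<dots> = ennreal (pi * (\<Delta> / Suc m) ^ (k + 1) / (real (Suc m) * real (k + 1)))"
    using \<Delta> k by (intro nn_integral_bump) (auto intro: Nat.gr0I)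
  finally show ?thesis .
qed

lemma borel_measurable_H_term: "(\<lambda>z. H_term k z t) \<in> borel_measurable borel"
proof -
  obtain a b c where "t = (a, b, c)"
    by (cases t) auto
  then have "continuous_on UNIV (\<lambda>z. H_term k z t)"
    by (simp add: H_term_def) (intro continuous_intros)
  then show ?thesis
    by (rule borel_measurable_continuous_onI)
qed

lemma countable_H_index: "d > 0 \<Longrightarrow> countable (H_index d \<Delta>)"
  using bij_betw_imp_surj_on[OF bij_betw_H_param] by (metis countableI_type countable_image)

lemma finite_norm_residues: "finite (norm_residues d D n)"
  by (rule finite_subset[of _ "{0..<int n} \<times> {0..<int n}"]) (auto simp: norm_residues_def)

lemma nn_integral_count_space_indicator_const:
  fixes c :: real
  shows "finite A \<Longrightarrow> (\<integral>\<^sup>+x. indicator A x * ennreal c \<partial>count_space UNIV) = ennreal (card A * c)"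
  by (simp add: nn_integral_multc emeasure_count_space_finite ennreal_mult' ennreal_of_nat_eq_real_of_nat)

lemma nn_integral_Par_H:
  assumes d: "d > 0" and \<Delta>: "\<Delta> > 0" and k: "odd k"
  shows "(\<integral>\<^sup>+z. (\<integral>\<^sup>+t. ennreal (H_term k z t) \<partial>count_space (H_index d \<Delta>)) * indicator (Par d) z \<partial>lborel)
           = (\<Sum>m. ennreal (card (norm_residues d (- \<Delta>) (Suc m))
                  * (pi * (\<Delta> / Suc m) ^ (k + 1) / (real (Suc m) * real (k + 1)))))"
proof -
  define I where "I m = pi * (\<Delta> / Suc m) ^ (k + 1) / (real (Suc m) * real (k + 1))" for m
  define F where "F u = (\<integral>\<^sup>+z. ennreal (H_term k z (H_param d \<Delta> u)) * indicator (Par d) z \<partial>lborel)" for u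
  note Par_sets_borel[OF d, measurable] borel_measurable_H_term[measurable]
  have "(\<integral>\<^sup>+z. (\<integral>\<^sup>+t. ennreal (H_term k z t) \<partial>count_space (H_index d \<Delta>)) * indicator (Par d) z \<partial>lborel)
      = (\<integral>\<^sup>+z. (\<integral>\<^sup>+t. ennreal (H_term k z t) * indicator (Par d) z \<partial>count_space (H_index d \<Delta>)) \<partial>lborel)"
    by (simp add: nn_integral_multc)
  also have "\<dots> = (\<integral>\<^sup>+t. (\<integral>\<^sup>+z. ennreal (H_term k z t) * indicator (Par d) z \<partial>lborel) \<partial>count_space (H_index d \<Delta>))"
    using countable_H_index[OF d] by (intro nn_integral_count_space_nn_integral) auto
  also have "\<dots> = (\<integral>\<^sup>+u. F u \<partial>count_space (H_params d \<Delta>))"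
    unfolding F_def by (rule nn_integral_bij_count_space[OF bij_betw_H_param[OF d], symmetric])
  also have "\<dots> = (\<integral>\<^sup>+m. (\<integral>\<^sup>+r. (\<integral>\<^sup>+pq. F (m, r, pq) * indicator (H_params d \<Delta>) (m, r, pq)
                      \<partial>count_space UNIV) \<partial>count_space UNIV) \<partial>count_space UNIV)"
    by (simp add: nn_integral_count_space_indicator flip: nn_integral_fst_count_space)
  also have "\<dots> = (\<integral>\<^sup>+m. (\<integral>\<^sup>+r. indicator (norm_residues d (- \<Delta>) (Suc m)) r * ennreal (I m)
                      \<partial>count_space UNIV) \<partial>count_space UNIV)"
  proof (intro nn_integral_cong)
    fix m r
    show "(\<integral>\<^sup>+pq. F (m, r, pq) * indicator (H_params d \<Delta>) (m, r, pq) \<partial>count_space UNIV)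
            = indicator (norm_residues d (- \<Delta>) (Suc m)) r * ennreal (I m)"
    proof (cases "r \<in> norm_residues d (- \<Delta>) (Suc m)")
      case True
      then have "(m, r, pq) \<in> H_params d \<Delta>" for pq
        by (simp add: H_params_def)
      with True show ?thesis
        using nn_integral_Par_H_residue[OF d \<Delta> k, of "fst r" "snd r" m] by (simp add: F_def I_def)
    next
      case False
      then have "(m, r, pq) \<notin> H_params d \<Delta>" for pq
        by (simp add: H_params_def)
      with False show ?thesis
        by simp
    qed
  qed
  also have "\<dots> = (\<integral>\<^sup>+m. ennreal (card (norm_residues d (- \<Delta>) (Suc m)) * I m) \<partial>count_space UNIV)"
    by (intro nn_integral_cong nn_integral_count_space_indicator_const finite_norm_residues)
  finally show ?thesis
    by (simp add: nn_integral_count_space_nat I_def)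
qed

lemma Zfun_nonneg: "d > 0 \<Longrightarrow> s \<ge> 2 \<Longrightarrow> 0 \<le> Zfun d D s"
  unfolding Zfun_def using summable_r_count by (intro suminf_nonneg) auto

lemma nn_integral_Par_H_eq_Zfun:
  assumes d: "d > 0" and \<Delta>: "\<Delta> > 0" and k: "odd k"
  shows "(\<integral>\<^sup>+z. (\<integral>\<^sup>+t. ennreal (H_term k z t) \<partial>count_space (H_index d \<Delta>)) * indicator (Par d) z \<partial>lborel)
           = ennreal (pi * \<Delta> ^ (k + 1) / real (k + 1) * Zfun d (- \<Delta>) (real (k + 1)))"
proof -
  define C where "C = pi * \<Delta> ^ (k + 1) / real (k + 1)"
  define a where "a m = real (r_count d (- \<Delta>) (Suc m)) * real (Suc m) powr (- real (k + 1) - 1)" for m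
  have k0: "k > 0"
    using k by (auto intro: Nat.gr0I)
  have summable: "summable a"
    unfolding a_def using summable_r_count[OF d, of "real (k + 1)"] k0 by simp
  have "real (Suc m) powr (- real (k + 1) - 1) = 1 / real (Suc m) ^ (k + 2)" for m
  proof -
    have "real (Suc m) powr (- real (k + 1) - 1) = inverse (real (Suc m) powr real (k + 2))"
      by (simp add: powr_minus [symmetric])
    also have "real (Suc m) powr real (k + 2) = real (Suc m) ^ (k + 2)"
      by (rule powr_realpow) simp
    finally show ?thesis
      by (simp add: divide_inverse)
  qed
  then have "card (norm_residues d (- \<Delta>) (Suc m)) * (pi * (\<Delta> / Suc m) ^ (k + 1) / (real (Suc m) * real (k + 1)))
               = C * a m" for m
    by (simp add: a_def C_def r_count_eq_card_norm_residues[OF d] field_simps power_divide)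
  then have "(\<integral>\<^sup>+z. (\<integral>\<^sup>+t. ennreal (H_term k z t) \<partial>count_space (H_index d \<Delta>)) * indicator (Par d) z \<partial>lborel)
               = (\<Sum>m. ennreal (C * a m))"
    by (simp add: nn_integral_Par_H[OF d \<Delta> k])
  also have "\<dots> = ennreal (\<Sum>m. C * a m)"
  proof (rule suminf_ennreal2)
    show "0 \<le> C * a m" for m
      using \<Delta> by (simp add: a_def C_def)
  qed (rule summable_mult[OF summable])
  also have "(\<Sum>m. C * a m) = C * Zfun d (- \<Delta>) (real (k + 1))"
    unfolding Zfun_def a_def[symmetric] using summable by (rule suminf_mult)
  finally show ?thesis
    by (simp add: C_def)
qed

theorem theorem4p1:
  fixes d k :: nat and \<Delta> :: int
  assumes "d \<in> {1, 2, 3, 7, 11}"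
    and "\<Delta> > 0"
    and "\<not> (\<exists>\<beta>\<in>Od d. \<beta> * cnj \<beta> = of_int \<Delta>)"
    and "odd k"
  shows "1 / (sqrt \<bar>real_of_int (discK d)\<bar> / 2) * integral (Par d) (Hfun d k \<Delta>)
         = 2 * pi * real_of_int \<Delta> ^ (k + 1) / (real (k + 1) * sqrt \<bar>real_of_int (discK d)\<bar>)
           * Zfun d (- \<Delta>) (real (k + 1))"
proof -
  have d: "d > 0"
    using assms(1) by auto
  define V where "V = pi * \<Delta> ^ (k + 1) / real (k + 1) * Zfun d (- \<Delta>) (real (k + 1))"
  have "0 \<le> Zfun d (- \<Delta>) (real (k + 1))"
    using assms(4) by (intro Zfun_nonneg[OF d]) (simp add: odd_pos Suc_le_eq)
  then have "V \<ge> 0"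
    using assms(2) by (simp add: V_def)
  then have "((\<lambda>z. infsum (H_term k z) (H_index d \<Delta>)) has_integral V) (Par d)"
    using countable_H_index[OF d] borel_measurable_H_term Par_sets_borel[OF d]
      nn_integral_Par_H_eq_Zfun[OF d assms(2,4)]
    by (intro has_integral_infsum_nonneg) (auto simp: H_term_def V_def)
  then have integral: "integral (Par d) (Hfun d k \<Delta>) = V"
    unfolding Hfun_eq_infsum[abs_def] by (rule integral_unique)
  have "sqrt \<bar>real_of_int (discK d)\<bar> > 0"
    using d by (simp add: discK_def)
  then show ?thesis
    unfolding integral V_def by (simp add: field_simps)
qed

end
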